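(* Let $b>0$ be irrational. Then there exist a strictly increasing sequence $(n_p)_{p\ge1}$ in $\mathbb N$ and a sequence $\gamma=(\gamma_n)_{n\ge1}$ of real numbers with $\gamma_{n_p}>0$ for all $p\ge1$, $\gamma_n=0$ for $n\notin J:=\{n_p:p\ge1\}$, $\sum_{n\ge1}n\gamma_n<\infty$, such that $$\sum_{p\ge1}n_p^3\gamma_{n_p}=\infty\qquad\text{and}\qquad \omega_{n_p}(\gamma)\in b\mathbb Z\ \ \forall p\ge1,$$ where $\omega_n(\gamma):=n^2-2\sum_{k=1}^nk\gamma_k-2n\sum_{k>n}\gamma_k$. Consequently every $u_0$ in the (nonempty) set $\mathrm{Iso}_\gamma:=\{u\in L^2_{r,0}:\gamma_n(u)=\gamma_n\ \forall n\ge1\}$ does not belong to $H^1_{r,0}$, and the solution $t\mapsto\mathcal S(t)u_0$ of the BO equation is periodic in time with period $T=2\pi/b$; thus $\mathrm{Iso}_\gamma$ is entirely filled with $T$-periodic solutions that are not finite gap solutions.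
   Context: $\mathbb T=\mathbb R/2\pi\mathbb Z$. For $s\in\mathbb R$, $H^s_{r,0}$ is the Sobolev space of real-valued distributions on $\mathbb T$ of $H^s$-regularity with zero mean; $L^2_{r,0}=H^0_{r,0}$. The Benjamin–Ono (BO) equation is $\partial_tu=H\partial_x^2u-\partial_x(u^2)$, $H$ the Hilbert transform (Fourier multiplier $-i\,\mathrm{sign}(n)$, zero at $n=0$). For $\sigma\in\mathbb R$, $h^\sigma_+$ is the space of complex sequences $(z_n)_{n\ge1}$ with $\sum n^{2\sigma}|z_n|^2<\infty$. Known facts taken as given: for every $s>-1/2$ the BO equation is globally well posed in $H^s_{r,0}$ with continuous solution map $\mathcal S(t)$; there is a map $\Phi:u\mapsto(\zeta_n(u))_{n\ge1}$ which for every $s>-1/2$ is a homeomorphism $H^s_{r,0}\to h^{s+1/2}_+$ (so $u\in H^s_{r,0}$ iff $\Phi(u)\in h^{s+1/2}_+$), with $\zeta_n(\mathcal S(t)u)=e^{i\omega_nt}\zeta_n(u)$, $\omega_n=n^2-2\sum_{k=1}^nk|\zeta_k(u)|^2-2n\sum_{k>n}|\zeta_k(u)|^2$. The actions are $\gamma_n(u):=|\zeta_n(u)|^2$. A finite gap solution is one whose initial datum $u_0$ has $\zeta_n(u_0)=0$ for all sufficiently large $n$. *)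

theory Defs
  imports "HOL-Analysis.Analysis"
begin

text \<open>Real zero-mean distributions on the torus are represented by their Fourier
  coefficients of positive index: u = sum over n of u_n e^{inx}, with u_{-n} the conjugate
  of u_n and u_0 = 0. So an element is a map nat to complex with value 0 at index 0.\<close>

definition Hs :: "real \<Rightarrow> (nat \<Rightarrow> complex) set" where
  "Hs s = {u. u 0 = 0 \<and> summable (\<lambda>n. (real n) powr (2 * s) * (cmod (u n))\<^sup>2)}"

definition hp :: "real \<Rightarrow> (nat \<Rightarrow> complex) set" where
  "hp \<sigma> = {z. z 0 = 0 \<and> summable (\<lambda>n. (real n) powr (2 * \<sigma>) * (cmod (z n))\<^sup>2)}"

definition omega :: "(nat \<Rightarrow> real) \<Rightarrow> nat \<Rightarrow> real" where
  "omega \<gamma> n = (real n)\<^sup>2 - 2 * (\<Sum>k=1..n. real k * \<gamma> k)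
                 - 2 * real n * infsum \<gamma> {n<..}"

text \<open>Actions gamma_n(u) = |zeta_n(u)|^2 given the Birkhoff map Phi.\<close>
definition actions :: "((nat \<Rightarrow> complex) \<Rightarrow> (nat \<Rightarrow> complex)) \<Rightarrow> (nat \<Rightarrow> complex) \<Rightarrow> nat \<Rightarrow> real" where
  "actions \<Phi> u n = (cmod (\<Phi> u n))\<^sup>2"

definition Iso :: "((nat \<Rightarrow> complex) \<Rightarrow> (nat \<Rightarrow> complex)) \<Rightarrow> (nat \<Rightarrow> real) \<Rightarrow> (nat \<Rightarrow> complex) set" where
  "Iso \<Phi> \<gamma> = {u \<in> Hs 0. \<forall>n\<ge>1. actions \<Phi> u n = \<gamma> n}"

definition finite_gap :: "((nat \<Rightarrow> complex) \<Rightarrow> (nat \<Rightarrow> complex)) \<Rightarrow> (nat \<Rightarrow> complex) \<Rightarrow> bool" where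
  "finite_gap \<Phi> u \<longleftrightarrow> (\<exists>N. \<forall>n\<ge>N. \<Phi> u n = 0)"

end

theory Submission
  imports Defs
begin

(* Since b is irrational, the numbers n^2 - b m with n > M and m integer are dense in the reals:
   Dirichlet approximation and pigeonholing give n0 with c = n0^2 - b m0 nonzero and arbitrarily
   small, and (k n0)^2 is congruent to k^2 c modulo b, which sweeps through any interval in steps
   shorter than it. Hence one can pick N_0 < N_1 < ... and S_i congruent to N_i^2 modulo b with
   0 < S_{i+1} - S_i <= tau_i and N_{i+1}^2 (S_{i+1} - S_i) >= 4. Placing the mass tau_i - tau_{i+1}
   at N_i makes omega_{N_i}(gamma) = N_i^2 - S_i, a multiple of b, and n^3 gamma_n >= 1 at every N_i.
   For u in Iso_gamma all frequencies of nonzero modes are then multiples of b, so the flow is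
   2 pi / b periodic; u is not in H^1 since the sum of n^3 gamma_n diverges, and not finite gap
   since gamma has infinite support. *)

lemma Dirichlet_approx_multiple:
  fixes b :: real and Q :: nat
  assumes "b > 0" "Q > 0"
  obtains h p :: int where "0 < h" "h \<le> int Q" "\<bar>of_int h - b * of_int p\<bar> < b / Q"
proof -
  obtain p h where h: "0 < h" "h \<le> int Q" "\<bar>of_int h * (1/b) - of_int p\<bar> < 1/Q"
    using Dirichlet_approx[OF assms(2), of "1/b"] by blast
  have "\<bar>of_int h - b * of_int p\<bar> = b * \<bar>of_int h * (1/b) - of_int p\<bar>"
    using assms(1) by (simp add: abs_mult_pos' field_simps flip: abs_mult)
  also have "\<dots> < b / Q"
    using mult_strict_left_mono[OF h(3) assms(1)] by simp
  finally show ?thesis using h that by blast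
qed

lemma Dirichlet_approx_multiples_sequence:
  fixes b :: real and Q :: nat
  assumes b: "b > 0" and Q: "Q > 0"
  obtains h p :: "nat \<Rightarrow> int" where "\<And>i. 0 < h i" "\<And>i. h i \<le> int Q ^ Suc i"
    "\<And>i. \<bar>of_int (h i) - b * of_int (p i)\<bar> < b / Q ^ Suc i"
proof -
  have "\<exists>h p :: int. 0 < h \<and> h \<le> int Q ^ Suc i \<and> \<bar>of_int h - b * of_int p\<bar> < b / Q ^ Suc i" for i
    using Dirichlet_approx_multiple[OF b, of "Q ^ Suc i"] Q by (metis of_nat_power zero_less_power)
  then show ?thesis using that by metis
qed

lemma frac_close_pair:
  fixes x :: "nat \<Rightarrow> real" and K :: nat
  assumes "K > 0"
  obtains k1 k2 where "k1 < k2" "k2 \<le> K" "\<bar>frac (x k2) - frac (x k1)\<bar> < 1 / K"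
proof -
  define box where "box k = nat \<lfloor>frac (x k) * K\<rfloor>" for k
  have "box k < K" for k
    using frac_lt_1[of "x k"] assms by (simp add: box_def nat_less_iff floor_less_iff)
  then have "card (box ` {0..K}) < card {0..K}"
    using card_mono[of "{0..<K}" "box ` {0..K}"] by fastforce
  then obtain k k' where kk': "k \<in> {0..K}" "k' \<in> {0..K}" "k < k'" "box k = box k'"
    using pigeonhole[of box "{0..K}"] unfolding inj_on_def by (metis linorder_neqE_nat)
  have "\<lfloor>frac (x k) * K\<rfloor> = \<lfloor>frac (x k') * K\<rfloor>"
    using kk'(4) by (simp add: box_def eq_nat_nat_iff)
  then have "\<bar>frac (x k') * K - frac (x k) * K\<bar> < 1" by linarith
  then have "\<bar>frac (x k') - frac (x k)\<bar> * K < 1"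
    by (simp add: abs_mult_pos flip: left_diff_distrib)
  then show ?thesis
    using that[of k k'] kk' assms by (simp add: field_simps)
qed

(* Adding h_k to the block sum H creates the cross term 2 H h_k = 2 H b p_k + 2 H delta_k, and the
   scales Q^(i+1) make |2 H delta_k| <= 2 d b / Q since H <= d Q^k while |delta_k| < b / Q^(k+1). *)
lemma square_of_sum_near_sum_of_squares:
  fixes h p :: "nat \<Rightarrow> int" and b :: real and Q m d :: nat
  assumes b: "b > 0" and Q: "Q > 0"
    and h_pos: "\<And>i. 0 < h i" and h_le: "\<And>i. h i \<le> int Q ^ Suc i"
    and h_approx: "\<And>i. \<bar>of_int (h i) - b * of_int (p i)\<bar> < b / Q ^ Suc i"
  shows "\<exists>M::int. \<bar>of_int ((\<Sum>i\<in>{m..<m+d}. h i)\<^sup>2 - (\<Sum>i\<in>{m..<m+d}. (h i)\<^sup>2)) - b * M\<bar>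
           \<le> 2 * b * d\<^sup>2 / Q"
proof (induction d)
  case 0
  show ?case by (auto intro!: exI[of _ 0])
next
  case (Suc d)
  then obtain M :: int where M: "\<bar>of_int ((\<Sum>i\<in>{m..<m+d}. h i)\<^sup>2 - (\<Sum>i\<in>{m..<m+d}. (h i)\<^sup>2)) - b * M\<bar>
      \<le> 2 * b * d\<^sup>2 / Q" by blast
  define k where "k = m + d"
  define H where "H = (\<Sum>i\<in>{m..<k}. h i)"
  have H_nonneg: "0 \<le> H"
    unfolding H_def using h_pos by (intro sum_nonneg) (simp add: less_imp_le)
  have "H \<le> (\<Sum>i\<in>{m..<k}. int Q ^ k)"
    unfolding H_def
  proof (rule sum_mono)
    fix i assume "i \<in> {m..<k}"
    then have "int Q ^ Suc i \<le> int Q ^ k" using Q by (intro power_increasing) auto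
    then show "h i \<le> int Q ^ k" using h_le[of i] by linarith
  qed
  also have "\<dots> = int d * int Q ^ k" by (simp add: k_def)
  finally have H_le: "real_of_int H \<le> d * real Q ^ k"
    by (metis of_int_le_iff of_int_mult of_int_of_nat_eq of_int_power)
  define \<delta> where "\<delta> = of_int (h k) - b * of_int (p k)"
  have "\<bar>2 * of_int H * \<delta>\<bar> = 2 * of_int H * \<bar>\<delta>\<bar>"
    using H_nonneg by (simp add: abs_mult)
  also have "\<dots> \<le> 2 * (d * real Q ^ k) * (b / Q ^ Suc k)"
    using h_approx[of k] H_le H_nonneg unfolding \<delta>_def by (intro mult_mono) auto
  also have "\<dots> = 2 * b * d / Q"
    using Q by (simp add: field_simps)
  finally have cross: "\<bar>2 * of_int H * \<delta>\<bar> \<le> 2 * b * d / Q" .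
  have "of_int ((\<Sum>i\<in>{m..<m+Suc d}. h i)\<^sup>2 - (\<Sum>i\<in>{m..<m+Suc d}. (h i)\<^sup>2)) - b * (M + 2 * H * p k)
      = (of_int ((\<Sum>i\<in>{m..<m+d}. h i)\<^sup>2 - (\<Sum>i\<in>{m..<m+d}. (h i)\<^sup>2)) - b * M) + 2 * of_int H * \<delta>"
    unfolding H_def \<delta>_def k_def by (simp add: power2_eq_square algebra_simps)
  moreover have "2 * b * d\<^sup>2 / Q + 2 * b * d / Q \<le> 2 * b * (Suc d)\<^sup>2 / Q"
    using b Q by (simp add: field_simps power2_eq_square)
  ultimately show ?case
    using M cross by (intro exI[of _ "M + 2 * H * p k"]) linarith
qed

lemma exists_square_near_multiple:
  fixes b \<epsilon> :: real
  assumes b: "b > 0" and \<epsilon>: "\<epsilon> > 0"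
  obtains n :: nat and m :: int where "n \<ge> 1" "\<bar>(real n)\<^sup>2 - b * m\<bar> < \<epsilon>"
proof -
  obtain K :: nat where K: "2 * b / \<epsilon> < K" using reals_Archimedean2 by blast
  moreover have "0 < 2 * b / \<epsilon>" using b \<epsilon> by simp
  ultimately have K_pos: "K > 0" by linarith
  have bK: "b / K < \<epsilon> / 2" using K K_pos \<epsilon> by (simp add: field_simps)
  obtain Q :: nat where Q: "4 * b * K\<^sup>2 / \<epsilon> < Q" using reals_Archimedean2 by blast
  moreover have "0 < 4 * b * K\<^sup>2 / \<epsilon>" using b \<epsilon> K_pos by simp
  ultimately have Q_pos: "Q > 0" by linarith
  have bKQ: "2 * b * K\<^sup>2 / Q < \<epsilon> / 2" using Q Q_pos \<epsilon> by (simp add: field_simps)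
  obtain h p :: "nat \<Rightarrow> int" where h_pos: "\<And>i. 0 < h i" and h_le: "\<And>i. h i \<le> int Q ^ Suc i"
    and h_approx: "\<And>i. \<bar>of_int (h i) - b * of_int (p i)\<bar> < b / Q ^ Suc i"
    using Dirichlet_approx_multiples_sequence[OF b Q_pos] by blast
  define x where "x k = (\<Sum>i<k. of_int ((h i)\<^sup>2)) / b" for k
  obtain k1 k2 where k12: "k1 < k2" "k2 \<le> K" and close: "\<bar>frac (x k2) - frac (x k1)\<bar> < 1 / K"
    using frac_close_pair[OF K_pos] by blast
  define d where "d = k2 - k1"
  define n where "n = (\<Sum>i\<in>{k1..<k1+d}. h i)"
  obtain M :: int where M: "\<bar>of_int (n\<^sup>2 - (\<Sum>i\<in>{k1..<k1+d}. (h i)\<^sup>2)) - b * M\<bar> \<le> 2 * b * d\<^sup>2 / Q"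
    using square_of_sum_near_sum_of_squares[OF b Q_pos h_pos h_le h_approx] unfolding n_def by blast
  have "2 * b * d\<^sup>2 / Q \<le> 2 * b * K\<^sup>2 / Q"
    using k12 b by (intro divide_right_mono mult_left_mono power_mono) (auto simp: d_def)
  with M bKQ have M': "\<bar>of_int (n\<^sup>2 - (\<Sum>i\<in>{k1..<k1+d}. (h i)\<^sup>2)) - b * M\<bar> < \<epsilon> / 2" by linarith
  have "(\<Sum>i<k2. of_int ((h i)\<^sup>2)) = (\<Sum>i<k1. of_int ((h i)\<^sup>2)) + (\<Sum>i\<in>{k1..<k1+d}. of_int ((h i)\<^sup>2) :: real)"
    using k12 by (simp add: d_def lessThan_atLeast0 sum.atLeastLessThan_concat)
  then have "of_int (\<Sum>i\<in>{k1..<k1+d}. (h i)\<^sup>2) = b * (x k2 - x k1)"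
    using b by (simp add: x_def field_simps)
  then have "of_int (\<Sum>i\<in>{k1..<k1+d}. (h i)\<^sup>2) - b * (\<lfloor>x k2\<rfloor> - \<lfloor>x k1\<rfloor>)
      = b * (frac (x k2) - frac (x k1))"
    by (simp add: frac_def algebra_simps)
  moreover have "b * \<bar>frac (x k2) - frac (x k1)\<bar> < b * (1 / K)"
    using close b by (intro mult_strict_left_mono)
  then have "b * \<bar>frac (x k2) - frac (x k1)\<bar> < \<epsilon> / 2"
    using bK by (simp only: times_divide_eq_right mult_1_right)
  ultimately have rest: "\<bar>of_int (\<Sum>i\<in>{k1..<k1+d}. (h i)\<^sup>2) - b * (\<lfloor>x k2\<rfloor> - \<lfloor>x k1\<rfloor>)\<bar> < \<epsilon> / 2"
    using b by (simp add: abs_mult)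
  have "(of_int n)\<^sup>2 - b * (M + \<lfloor>x k2\<rfloor> - \<lfloor>x k1\<rfloor>)
      = (of_int (n\<^sup>2 - (\<Sum>i\<in>{k1..<k1+d}. (h i)\<^sup>2)) - b * M)
        + (of_int (\<Sum>i\<in>{k1..<k1+d}. (h i)\<^sup>2) - b * (\<lfloor>x k2\<rfloor> - \<lfloor>x k1\<rfloor>))"
    by (simp add: algebra_simps)
  then have "\<bar>(of_int n)\<^sup>2 - b * (M + \<lfloor>x k2\<rfloor> - \<lfloor>x k1\<rfloor>)\<bar>
      \<le> \<bar>of_int (n\<^sup>2 - (\<Sum>i\<in>{k1..<k1+d}. (h i)\<^sup>2)) - b * M\<bar>
        + \<bar>of_int (\<Sum>i\<in>{k1..<k1+d}. (h i)\<^sup>2) - b * (\<lfloor>x k2\<rfloor> - \<lfloor>x k1\<rfloor>)\<bar>"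
    by (simp only: abs_triangle_ineq)
  also have "\<dots> < \<epsilon>" using M' rest by linarith
  finally have close_n: "\<bar>(of_int n)\<^sup>2 - b * (M + \<lfloor>x k2\<rfloor> - \<lfloor>x k1\<rfloor>)\<bar> < \<epsilon>" .
  have "h k1 \<le> n"
    unfolding n_def using k12 h_pos by (intro member_le_sum) (auto simp: d_def less_imp_le)
  then have "1 \<le> n" using h_pos[of k1] by linarith
  then show ?thesis
    using that[of "nat n" "M + \<lfloor>x k2\<rfloor> - \<lfloor>x k1\<rfloor>"] close_n by simp
qed

lemma exists_square_multiple_between:
  fixes c x \<epsilon> :: real
  assumes c: "c > 0" and x: "x \<ge> 0" and c_small: "2 * c < \<epsilon>" and cx_small: "16 * c * x < \<epsilon>\<^sup>2"
  obtains k :: nat where "x < (real k)\<^sup>2 * c" "(real k)\<^sup>2 * c < x + \<epsilon>"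
proof -
  define P where "P k \<longleftrightarrow> x < (real k)\<^sup>2 * c" for k :: nat
  obtain k0 :: nat where "x / c < k0" using reals_Archimedean2 by blast
  then have "x < k0 * c" using c by (simp add: field_simps)
  also have "\<dots> \<le> (real k0)\<^sup>2 * c"
    using c by (intro mult_right_mono) (auto simp: power2_eq_square le_square simp flip: of_nat_mult)
  finally have "P k0" unfolding P_def .
  define k where "k = (LEAST k. P k)"
  have Pk: "P k" unfolding k_def using \<open>P k0\<close> by (rule LeastI)
  then have "k \<noteq> 0" using x by (cases k) (auto simp: P_def)
  then have "\<not> P (k - 1)" unfolding k_def by (intro not_less_Least) (simp add: k_def)
  then have below: "(real (k - 1))\<^sup>2 * c \<le> x" by (simp add: P_def)
  have "(real (k - 1) * c)\<^sup>2 = (real (k - 1))\<^sup>2 * c * c" by (simp add: power2_eq_square)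
  also have "\<dots> \<le> x * c" using below c by (intro mult_right_mono) auto
  also have "\<dots> < (\<epsilon> / 4)\<^sup>2" using cx_small by (simp add: power_divide field_simps)
  finally have "real (k - 1) * c < \<epsilon> / 4"
    by (rule power_less_imp_less_base) (use c c_small in auto)
  moreover have "(real k)\<^sup>2 * c = (real (k - 1))\<^sup>2 * c + 2 * (real (k - 1) * c) + c"
    using \<open>k \<noteq> 0\<close> by (simp add: of_nat_diff power2_eq_square algebra_simps)
  ultimately show ?thesis
    using that[of k] Pk below c_small by (simp add: P_def)
qed

lemma exists_square_multiple_modulo:
  fixes b c y \<epsilon> :: real and M :: nat
  assumes b: "b > 0" and c: "0 < c" "c \<le> 1" "2 * c < \<epsilon>"
    and small: "16 * c * ((real M + 1)\<^sup>2 + b) < \<epsilon>\<^sup>2"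
  obtains k :: nat and t :: int where "M < k" "y < (real k)\<^sup>2 * c + b * t" "(real k)\<^sup>2 * c + b * t < y + \<epsilon>"
proof -
  define t where "t = \<lceil>((real M + 1)\<^sup>2 - y) / b\<rceil>"
  define x where "x = y + b * t"
  have "((real M + 1)\<^sup>2 - y) / b \<le> t" "t < ((real M + 1)\<^sup>2 - y) / b + 1"
    unfolding t_def by linarith+
  then have x_ge: "(real M + 1)\<^sup>2 \<le> x" and x_less: "x < (real M + 1)\<^sup>2 + b"
    using b by (auto simp: x_def field_simps)
  have "16 * c * x \<le> 16 * c * ((real M + 1)\<^sup>2 + b)"
    using c x_less by (intro mult_left_mono) auto
  then obtain k :: nat where k: "x < (real k)\<^sup>2 * c" "(real k)\<^sup>2 * c < x + \<epsilon>"
    using exists_square_multiple_between[OF c(1), of x \<epsilon>] c(3) small x_ge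
    by (smt (verit) zero_le_power2)
  have "(real M + 1)\<^sup>2 < (real k)\<^sup>2"
    using k(1) x_ge c mult_left_le[of c "(real k)\<^sup>2"] by (simp add: mult.commute)
  then have "M < k" using power_less_imp_less_base[of "real M + 1" 2 "real k"] by simp
  with k show ?thesis using that[of k "- t"] by (simp add: x_def)
qed

lemma squares_dense_modulo:
  fixes b x \<epsilon> :: real and M :: nat
  assumes b: "b > 0" "b \<notin> \<rat>" and \<epsilon>: "\<epsilon> > 0"
  obtains n :: nat and m :: int where "M < n" "x < (real n)\<^sup>2 - b * m" "(real n)\<^sup>2 - b * m < x + \<epsilon>"
proof -
  define A where "A = (real M + 1)\<^sup>2"
  define \<delta> where "\<delta> = min 1 (min (\<epsilon> / 2) (\<epsilon>\<^sup>2 / (16 * (A + b))))"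
  have A: "A \<ge> 1" by (simp add: A_def)
  have \<delta>: "\<delta> > 0" using A b \<epsilon> by (simp add: \<delta>_def)
  have multiple_in_interval: "\<exists>k t. M < k \<and> y < (real k)\<^sup>2 * c + b * of_int t \<and> (real k)\<^sup>2 * c + b * of_int t < y + \<epsilon>"
    if c: "0 < c" "c < \<delta>" for c y :: real
  proof -
    have "0 < 16 * (A + b)" using A b by simp
    moreover have "c < \<epsilon>\<^sup>2 / (16 * (A + b))" using c by (simp add: \<delta>_def)
    ultimately have "16 * c * (A + b) < \<epsilon>\<^sup>2"
      by (simp add: pos_less_divide_eq mult.commute mult.left_commute)
    then have small: "16 * c * ((real M + 1)\<^sup>2 + b) < \<epsilon>\<^sup>2"
      by (simp only: A_def)
    have "c \<le> 1" "2 * c < \<epsilon>" using c by (auto simp: \<delta>_def)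
    then obtain k t where "M < k" "y < (real k)\<^sup>2 * c + b * of_int t" "(real k)\<^sup>2 * c + b * of_int t < y + \<epsilon>"
      using exists_square_multiple_modulo[OF b(1) c(1) _ _ small, where y = y] by blast
    then show ?thesis by blast
  qed
  obtain n0 :: nat and m0 :: int where n0: "n0 \<ge> 1" "\<bar>(real n0)\<^sup>2 - b * m0\<bar> < \<delta>"
    using exists_square_near_multiple[OF b(1) \<delta>] by blast
  define c where "c = (real n0)\<^sup>2 - b * m0"
  have "c \<noteq> 0"
  proof
    assume "c = 0"
    then have "b * m0 = (real n0)\<^sup>2" by (simp add: c_def)
    moreover from this n0(1) have "m0 \<noteq> 0" by auto
    ultimately have "b = of_nat (n0\<^sup>2) / of_int m0" by (simp add: field_simps)
    then show False using b(2) by simp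
  qed
  have square_kn0: "(real (k * n0))\<^sup>2 - b * of_int (int (k\<^sup>2) * m0 - t) = (real k)\<^sup>2 * c + b * t"
    for k :: nat and t :: int
    by (simp add: c_def power_mult_distrib algebra_simps)
  have n0_mult: "M < k * n0" if "M < k" for k
    using that n0(1) by (metis le_trans less_le_trans mult_le_mono2 nat_mult_1_right)
  have "\<exists>k t. M < k \<and> x < (real k)\<^sup>2 * c + b * of_int t \<and> (real k)\<^sup>2 * c + b * of_int t < x + \<epsilon>"
  proof (cases "c > 0")
    case True
    then show ?thesis using multiple_in_interval[of c x] n0(2) by (simp add: c_def)
  next
    case False
    with \<open>c \<noteq> 0\<close> obtain k t where "M < k" "- x - \<epsilon> < (real k)\<^sup>2 * - c + b * of_int t"
      "(real k)\<^sup>2 * - c + b * of_int t < - x"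
      using multiple_in_interval[of "- c" "- x - \<epsilon>"] n0(2) by (auto simp: c_def)
    then show ?thesis by (intro exI[of _ k] exI[of _ "- t"]) auto
  qed
  then obtain k t where "M < k" "x < (real k)\<^sup>2 * c + b * of_int t" "(real k)\<^sup>2 * c + b * of_int t < x + \<epsilon>"
    by blast
  then show ?thesis
    using that[of "k * n0" "int (k\<^sup>2) * m0 - t"] n0_mult square_kn0[of k t] by metis
qed

lemma not_summable_on_if_infinite_ge:
  fixes f :: "'a \<Rightarrow> real" and c :: real
  assumes c: "c > 0" and inf: "infinite {x \<in> A. c \<le> f x}"
  shows "\<not> f summable_on A"
proof
  define B where "B = {x \<in> A. c \<le> f x}"
  assume "f summable_on A"
  then have "f summable_on B" by (rule summable_on_subset_banach) (auto simp: B_def)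
  obtain F where F: "finite F" "card F = nat \<lceil>infsum f B / c\<rceil> + 1" "F \<subseteq> B"
    using infinite_arbitrarily_large[OF inf[folded B_def]] by blast
  have "infsum f B / c < card F" using F(2) by linarith
  then have "infsum f B < card F * c" using c by (simp add: field_simps)
  also have "\<dots> \<le> sum f F" using F(3) by (intro sum_bounded_below[where K = c, simplified]) (auto simp: B_def)
  also have "\<dots> \<le> infsum f B"
    using \<open>f summable_on B\<close> F c by (intro finite_sum_le_infsum) (auto simp: B_def)
  finally show False by simp
qed

(* Sq i is the prescribed value of N_i^2 - omega_{N_i}(gamma) and tau (Suc i) the mass of gamma beyond
   N_i; the recursion for tau is what makes the two agree (omega_gamma_N). *)
locale gamma_construction =
  fixes N :: "nat \<Rightarrow> nat" and Sq \<tau> :: "nat \<Rightarrow> real"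
  assumes strict_mono_N: "strict_mono N"
    and N_0: "N 0 \<ge> 1"
    and Sq_0: "Sq 0 > 0"
    and \<tau>_0: "\<tau> 0 = Sq 0 / (2 * N 0)"
    and Sq_less: "Sq i < Sq (Suc i)"
    and Sq_step_le: "Sq (Suc i) - Sq i \<le> \<tau> i"
    and Sq_step_ge: "4 \<le> (real (N (Suc i)))\<^sup>2 * (Sq (Suc i) - Sq i)"
    and \<tau>_Suc: "\<tau> (Suc i) = (Sq (Suc i) - Sq i) / (2 * (real (N (Suc i)) - real (N i)))"
begin

definition gamma :: "nat \<Rightarrow> real" where
  "gamma k = (if k \<in> range N then \<tau> (inv N k) - \<tau> (Suc (inv N k)) else 0)"

lemma inj_N: "inj N"
  using strict_mono_N by (rule strict_mono_imp_inj_on)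

lemma N_ge_1: "N i \<ge> 1"
  using N_0 strict_mono_N by (metis le_trans strict_mono_less_eq zero_le)

lemma N_Suc_ge: "real (N (Suc i)) - real (N i) \<ge> 1"
  using strict_mono_N[unfolded strict_mono_def, rule_format, of i "Suc i"] by simp

lemma \<tau>_pos: "\<tau> i > 0"
proof (cases i)
  case 0
  then show ?thesis using Sq_0 N_0 by (simp add: \<tau>_0)
next
  case (Suc j)
  then show ?thesis using Sq_less[of j] N_Suc_ge[of j] by (simp add: \<tau>_Suc)
qed

lemma \<tau>_Suc_le_half: "\<tau> (Suc i) \<le> \<tau> i / 2"
proof -
  have "\<tau> (Suc i) \<le> (Sq (Suc i) - Sq i) / 2"
    unfolding \<tau>_Suc using N_Suc_ge[of i] Sq_less[of i] by (intro divide_left_mono) auto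
  then show ?thesis using Sq_step_le[of i] by simp
qed

lemma \<tau>_tendsto_0: "\<tau> \<longlonglongrightarrow> 0"
proof (rule tendsto_sandwich[of "\<lambda>_. 0" _ _ "\<lambda>i. \<tau> 0 * (1/2) ^ i"])
  have "\<tau> i \<le> \<tau> 0 * (1/2) ^ i" for i
    by (induction i) (use \<tau>_Suc_le_half in \<open>auto intro: order_trans\<close>)
  then show "\<forall>\<^sub>F i in sequentially. \<tau> i \<le> \<tau> 0 * (1/2) ^ i" by simp
  show "\<forall>\<^sub>F i in sequentially. 0 \<le> \<tau> i" using \<tau>_pos by (simp add: less_imp_le)
  show "(\<lambda>i. \<tau> 0 * (1/2) ^ i) \<longlonglongrightarrow> 0"
    by (intro tendsto_mult_right_zero LIMSEQ_realpow_zero) auto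
qed simp

lemma gamma_N: "gamma (N i) = \<tau> i - \<tau> (Suc i)"
  using inj_N by (simp add: gamma_def)

lemma gamma_N_pos: "gamma (N i) > 0"
  using \<tau>_Suc_le_half[of i] \<tau>_pos[of i] by (simp add: gamma_N)

lemma gamma_nonneg: "gamma k \<ge> 0"
  using gamma_N_pos by (auto simp: gamma_def less_imp_le)

lemma gamma_eq_0: "k \<notin> range N \<Longrightarrow> gamma k = 0"
  by (simp add: gamma_def)

lemma sum_gamma_N: "(\<Sum>k\<le>N i. real k * gamma k) = (\<Sum>j\<le>i. real (N j) * gamma (N j))"
proof -
  have "(\<Sum>k\<le>N i. real k * gamma k) = (\<Sum>k\<in>N ` {..i}. real k * gamma k)"
  proof (rule sum.mono_neutral_right)
    show "\<forall>k\<in>{..N i} - N ` {..i}. real k * gamma k = 0"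
    proof
      fix k assume k: "k \<in> {..N i} - N ` {..i}"
      then have "k \<notin> range N"
        using strict_mono_N by (auto simp: strict_mono_less_eq)
      then show "real k * gamma k = 0" by (simp add: gamma_eq_0)
    qed
  qed (use strict_mono_N in \<open>auto simp: strict_mono_less_eq\<close>)
  also have "\<dots> = (\<Sum>j\<le>i. real (N j) * gamma (N j))"
    using inj_N by (simp add: sum.reindex inj_on_subset)
  finally show ?thesis .
qed

lemma weighted_sum_gamma_N: "(\<Sum>k\<le>N i. real k * gamma k) + real (N i) * \<tau> (Suc i) = Sq i / 2"
proof (induction i)
  case 0
  show ?case using \<tau>_0 N_0 by (simp add: sum_gamma_N gamma_N field_simps)
next
  case (Suc i)
  have "(real (N (Suc i)) - real (N i)) * \<tau> (Suc i) = (Sq (Suc i) - Sq i) / 2"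
    using N_Suc_ge[of i] by (simp add: \<tau>_Suc field_simps)
  with Suc show ?case by (simp add: sum_gamma_N gamma_N algebra_simps)
qed

lemma has_sum_gamma_tail: "(gamma has_sum \<tau> (Suc i)) {N i<..}"
proof -
  have "(\<lambda>j. \<tau> (j + Suc i)) \<longlonglongrightarrow> 0"
    using \<tau>_tendsto_0 by (rule LIMSEQ_ignore_initial_segment)
  then have "(\<lambda>j. gamma (N (j + Suc i))) sums \<tau> (Suc i)"
    using telescope_sums'[OF \<open>(\<lambda>j. \<tau> (j + Suc i)) \<longlonglongrightarrow> 0\<close>] by (simp add: gamma_N)
  then have "((\<lambda>j. gamma (N (j + Suc i))) has_sum \<tau> (Suc i)) UNIV"
    using gamma_nonneg by (intro sums_nonneg_imp_has_sum) auto
  moreover have "bij_betw (\<lambda>j. N (j + Suc i)) UNIV (N ` {i<..})"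
  proof -
    have "bij_betw (\<lambda>j. j + Suc i) UNIV {i<..}"
      by (rule bij_betwI[where g = "\<lambda>k. k - Suc i"]) auto
    moreover have "bij_betw N {i<..} (N ` {i<..})"
      using inj_N by (simp add: inj_on_imp_bij_betw inj_on_subset)
    ultimately show ?thesis
      using bij_betw_trans by (fastforce simp: o_def)
  qed
  ultimately have "(gamma has_sum \<tau> (Suc i)) (N ` {i<..})"
    using has_sum_reindex_bij_betw[of "\<lambda>j. N (j + Suc i)" UNIV "N ` {i<..}" gamma] by simp
  moreover have "N ` {i<..} \<subseteq> {N i<..}"
    using strict_mono_N by (auto simp: strict_mono_less)
  moreover have "gamma k = 0" if "k \<in> {N i<..} - N ` {i<..}" for k
    using that strict_mono_N by (cases "k \<in> range N") (auto simp: strict_mono_less gamma_eq_0)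
  ultimately show ?thesis
    by (subst (asm) has_sum_cong_neutral[of "{N i<..}" "N ` {i<..}" gamma gamma]) auto
qed

lemma omega_gamma_N: "omega gamma (N i) = (real (N i))\<^sup>2 - Sq i"
proof -
  have "(\<Sum>k=1..N i. real k * gamma k) = (\<Sum>k\<le>N i. real k * gamma k)"
    by (rule sum.mono_neutral_left) auto
  moreover have "infsum gamma {N i<..} = \<tau> (Suc i)"
    using has_sum_gamma_tail by (rule infsumI)
  ultimately show ?thesis
    unfolding omega_def using weighted_sum_gamma_N[of i] by simp
qed

lemma summable_weighted_gamma: "summable (\<lambda>n. real n * gamma n)"
proof (rule summableI_nonneg_bounded)
  have Sq_le: "Sq i + 2 * \<tau> i \<le> Sq 0 + 2 * \<tau> 0" for i
  proof (induction i)
    case (Suc i)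
    then show ?case using Sq_step_le[of i] \<tau>_Suc_le_half[of i] by linarith
  qed simp
  show "(\<Sum>k<n. real k * gamma k) \<le> (Sq 0 + 2 * \<tau> 0) / 2" for n
  proof -
    have "(\<Sum>k<n. real k * gamma k) \<le> (\<Sum>k\<le>N n. real k * gamma k)"
      using strict_mono_imp_increasing[OF strict_mono_N, of n] gamma_nonneg
      by (intro sum_mono2) auto
    also have "\<dots> \<le> Sq n / 2"
      using weighted_sum_gamma_N[of n] \<tau>_pos[of "Suc n"]
        mult_nonneg_nonneg[of "real (N n)" "\<tau> (Suc n)"] by linarith
    finally show ?thesis using Sq_le[of n] \<tau>_pos[of n] by simp
  qed
qed (simp add: gamma_nonneg)

lemma cube_gamma_N_ge_1: "1 \<le> (real (N (Suc i)))^3 * gamma (N (Suc i))"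
proof -
  define n where "n = real (N (Suc i))"
  define d where "d = Sq (Suc i) - Sq i"
  have n: "n \<ge> 1" using N_ge_1 by (simp add: n_def)
  have "d / (2 * n) \<le> \<tau> (Suc i)"
    unfolding \<tau>_Suc d_def[symmetric] n_def using N_Suc_ge[of i] Sq_less[of i] N_ge_1[of i]
    by (intro divide_left_mono) (auto simp: d_def)
  then have "d / (4 * n) \<le> gamma (N (Suc i))"
    using \<tau>_Suc_le_half[of "Suc i"] by (simp add: gamma_N field_simps)
  have "1 \<le> n\<^sup>2 * d / 4"
    using Sq_step_ge[of i] by (simp add: n_def d_def)
  also have "\<dots> = n ^ 3 * (d / (4 * n))"
    using n by (simp add: field_simps power2_eq_square power3_eq_cube)
  also have "\<dots> \<le> n ^ 3 * gamma (N (Suc i))"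
    using \<open>d / (4 * n) \<le> gamma (N (Suc i))\<close> n by (intro mult_left_mono) auto
  finally show ?thesis by (simp add: n_def)
qed

lemma gamma_0: "gamma 0 = 0"
  using N_ge_1 by (intro gamma_eq_0) (metis imageE not_one_le_zero)

lemma infinite_support_gamma: "infinite {n. gamma n \<noteq> 0}"
proof (rule infinite_super)
  show "range N \<subseteq> {n. gamma n \<noteq> 0}" using gamma_N_pos by (auto simp: less_le)
qed (rule range_inj_infinite[OF inj_N])

lemma not_summable_cube_gamma: "\<not> summable (\<lambda>n. real n ^ 3 * gamma n)"
proof
  assume "summable (\<lambda>n. real n ^ 3 * gamma n)"
  then have "(\<lambda>n. real n ^ 3 * gamma n) summable_on UNIV"
    using gamma_nonneg by (intro summable_nonneg_imp_summable_on) auto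
  moreover have "infinite {n \<in> UNIV. 1 \<le> real n ^ 3 * gamma n}"
  proof (rule infinite_super)
    show "range (\<lambda>i. N (Suc i)) \<subseteq> {n \<in> UNIV. 1 \<le> real n ^ 3 * gamma n}"
      using cube_gamma_N_ge_1 by auto
    show "infinite (range (\<lambda>i. N (Suc i)))"
      using inj_N by (intro range_inj_infinite injI) (auto dest: injD)
  qed
  ultimately show False
    using not_summable_on_if_infinite_ge[where c = 1 and A = UNIV and f = "\<lambda>n. real n ^ 3 * gamma n"]
    by simp
qed

lemma not_summable_on_cube_gamma_N_shifted:
  "\<not> ((\<lambda>p. (real (N (p - 1)))^3 * gamma (N (p - 1))) summable_on {1..})"
proof (rule not_summable_on_if_infinite_ge[of 1])
  have "p \<in> {p \<in> {1..}. 1 \<le> (real (N (p - 1)))^3 * gamma (N (p - 1))}" if "p \<ge> 2" for p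
    using that cube_gamma_N_ge_1[of "p - 2"] by (simp add: Suc_diff_Suc numeral_2_eq_2)
  then show "infinite {p \<in> {1..}. 1 \<le> (real (N (p - 1)))^3 * gamma (N (p - 1))}"
    by (intro infinite_super[OF _ infinite_Ici[of "2 :: nat"]]) auto
qed simp

lemma omega_gamma_multiple:
  assumes Sq_mod_b: "\<And>i. \<exists>m::int. Sq i = (real (N i))\<^sup>2 - b * m" and "gamma n \<noteq> 0"
  shows "\<exists>m::int. omega gamma n = b * m"
proof -
  have "n \<in> range N" using assms(2) gamma_eq_0 by blast
  then obtain i where "n = N i" by blast
  moreover obtain m :: int where "Sq i = (real (N i))\<^sup>2 - b * m" using Sq_mod_b by blast
  ultimately show ?thesis by (auto simp: omega_gamma_N)
qed

end

lemma exists_square_step: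
  fixes b \<tau> S :: real and n :: nat
  assumes b: "b > 0" "b \<notin> \<rat>" and \<tau>: "\<tau> > 0"
  obtains n' :: nat and S' :: real where "n < n'" "\<exists>m::int. S' = (real n')\<^sup>2 - b * m"
    "S < S'" "S' - S \<le> \<tau>" "4 \<le> (real n')\<^sup>2 * (S' - S)"
proof -
  obtain n' :: nat and m :: int where n': "max n (nat \<lceil>8 / \<tau>\<rceil>) < n'"
    and S': "S + \<tau> / 2 < (real n')\<^sup>2 - b * m" "(real n')\<^sup>2 - b * m < S + \<tau> / 2 + \<tau> / 2"
    using squares_dense_modulo[OF b, where x = "S + \<tau> / 2" and \<epsilon> = "\<tau> / 2" and M = "max n (nat \<lceil>8 / \<tau>\<rceil>)"] \<tau>
    by auto
  have "8 / \<tau> \<le> real n'" using n' by linarith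
  also have "\<dots> \<le> (real n')\<^sup>2" using n' by (simp add: power2_eq_square le_square flip: of_nat_mult)
  finally have "8 / \<tau> * (\<tau> / 2) \<le> (real n')\<^sup>2 * ((real n')\<^sup>2 - b * m - S)"
    using S' \<tau> by (intro mult_mono) auto
  then show ?thesis
    using that[of n' "(real n')\<^sup>2 - b * m"] n' S' \<tau> by auto
qed

lemma exists_gamma_construction:
  fixes b :: real
  assumes b: "b > 0" "b \<notin> \<rat>"
  obtains N Sq \<tau> where "gamma_construction N Sq \<tau>" "\<And>i. \<exists>m::int. Sq i = (real (N i))\<^sup>2 - b * m"
proof -
  define P where "P i x \<longleftrightarrow> (case x of (n, S, t) \<Rightarrow> 1 \<le> n \<and> 0 < t \<and> (\<exists>m::int. S = (real n)\<^sup>2 - b * m)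
      \<and> (i = 0 \<longrightarrow> 0 < S \<and> t = S / (2 * n)))" for i :: nat and x :: "nat \<times> real \<times> real"
  define Q where "Q i x y \<longleftrightarrow> (case (x, y) of ((n, S, t), (n', S', t')) \<Rightarrow> n < n' \<and> S < S' \<and> S' - S \<le> t
      \<and> 4 \<le> (real n')\<^sup>2 * (S' - S) \<and> t' = (S' - S) / (2 * (real n' - real n)))"
    for i :: nat and x y :: "nat \<times> real \<times> real"
  have "\<exists>f. \<forall>i. P i (f i) \<and> Q i (f i) (f (Suc i))"
  proof (rule dependent_nat_choice)
    obtain n0 :: nat and m0 :: int where "0 < n0" "0 < (real n0)\<^sup>2 - b * m0"
      by (rule squares_dense_modulo[OF b, where x = 0 and \<epsilon> = 1 and M = 0]) auto
    then show "\<exists>x. P 0 x"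
      by (intro exI[of _ "(n0, (real n0)\<^sup>2 - b * m0, ((real n0)\<^sup>2 - b * m0) / (2 * n0))"]) (auto simp: P_def)
  next
    fix x i assume "P i x"
    then obtain n S t where x: "x = (n, S, t)" and "1 \<le> n" "0 < t" by (auto simp: P_def split: prod.splits)
    then obtain n' S' where "n < n'" "\<exists>m::int. S' = (real n')\<^sup>2 - b * m" "S < S'" "S' - S \<le> t"
      "4 \<le> (real n')\<^sup>2 * (S' - S)"
      using exists_square_step[OF b] by metis
    with \<open>1 \<le> n\<close> show "\<exists>y. P (Suc i) y \<and> Q i x y"
      by (intro exI[of _ "(n', S', (S' - S) / (2 * (real n' - real n)))"]) (auto simp: P_def Q_def x)
  qed
  then obtain f where f: "\<And>i. P i (f i)" "\<And>i. Q i (f i) (f (Suc i))" by blast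
  define N where "N i = fst (f i)" for i
  define Sq where "Sq i = fst (snd (f i))" for i
  define \<tau> where "\<tau> i = snd (snd (f i))" for i
  have state: "1 \<le> N i" "\<exists>m::int. Sq i = (real (N i))\<^sup>2 - b * m"
    "i = 0 \<Longrightarrow> 0 < Sq i \<and> \<tau> i = Sq i / (2 * N i)" for i
    using f(1)[of i] by (cases "f i"; auto simp: P_def N_def Sq_def \<tau>_def)+
  have step: "N i < N (Suc i) \<and> Sq i < Sq (Suc i) \<and> Sq (Suc i) - Sq i \<le> \<tau> i
      \<and> 4 \<le> (real (N (Suc i)))\<^sup>2 * (Sq (Suc i) - Sq i)
      \<and> \<tau> (Suc i) = (Sq (Suc i) - Sq i) / (2 * (real (N (Suc i)) - real (N i)))" for i
    using f(2)[of i] by (cases "f i"; cases "f (Suc i)") (auto simp: Q_def N_def Sq_def \<tau>_def)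
  have "gamma_construction N Sq \<tau>"
    by unfold_locales (use state step in \<open>auto intro: strict_monoI_Suc\<close>)
  moreover note state(2)
  ultimately show ?thesis using that by blast
qed

lemma Iso_nonempty:
  assumes bij: "bij_betw \<Phi> (Hs 0) (hp (1/2))"
    and nonneg: "\<And>n. \<gamma> n \<ge> 0" and summable: "summable (\<lambda>n. real n * \<gamma> n)"
  shows "Iso \<Phi> \<gamma> \<noteq> {}"
proof -
  define z where "z n = (if n = 0 then 0 else complex_of_real (sqrt (\<gamma> n)))" for n
  have "(\<lambda>n. real n * \<gamma> n) = (\<lambda>n. real n powr (2 * (1/2)) * (cmod (z n))\<^sup>2)"
    using nonneg by (auto simp: z_def)
  with summable have "z \<in> hp (1/2)" by (simp add: hp_def z_def)
  then obtain u where "u \<in> Hs 0" "\<Phi> u = z"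
    using bij by (metis bij_betw_imp_surj_on imageE)
  then have "u \<in> Iso \<Phi> \<gamma>" using nonneg by (auto simp: Iso_def actions_def z_def)
  then show ?thesis by blast
qed

lemma actions_eq_if_Iso:
  assumes bij: "bij_betw \<Phi> (Hs 0) (hp (1/2))" and u: "u \<in> Iso \<Phi> \<gamma>" and \<gamma>_0: "\<gamma> 0 = 0"
  shows "actions \<Phi> u = \<gamma>"
proof
  fix n
  have "\<Phi> u \<in> hp (1/2)" using u bij by (auto simp: Iso_def bij_betw_apply)
  then show "actions \<Phi> u n = \<gamma> n"
    using u \<gamma>_0 by (cases "n = 0") (auto simp: Iso_def actions_def hp_def)
qed

lemma Iso_not_Hs_1:
  assumes bij: "bij_betw \<Phi> (Hs 1) (hp (3/2))" and u: "u \<in> Iso \<Phi> \<gamma>"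
    and not_summable: "\<not> summable (\<lambda>n. real n ^ 3 * \<gamma> n)"
  shows "u \<notin> Hs 1"
proof
  assume "u \<in> Hs 1"
  then have "summable (\<lambda>n. real n powr 3 * (cmod (\<Phi> u n))\<^sup>2)"
    using bij by (auto simp: hp_def dest: bij_betw_apply)
  moreover have "(\<lambda>n. real n powr 3 * (cmod (\<Phi> u n))\<^sup>2) = (\<lambda>n. real n ^ 3 * \<gamma> n)"
  proof
    fix n
    show "real n powr 3 * (cmod (\<Phi> u n))\<^sup>2 = real n ^ 3 * \<gamma> n"
      using u by (cases "n = 0") (auto simp: Iso_def actions_def powr_realpow)
  qed
  ultimately show False using not_summable by simp
qed

lemma Iso_periodic:
  assumes bij: "bij_betw \<Phi> (Hs 0) (hp (1/2))"
    and S_wp: "\<And>t u. u \<in> Hs 0 \<Longrightarrow> S t u \<in> Hs 0"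
    and S_Phi: "\<And>t u n. u \<in> Hs 0 \<Longrightarrow> n \<ge> 1 \<Longrightarrow>
      \<Phi> (S t u) n = exp (\<i> * complex_of_real (omega (actions \<Phi> u) n * t)) * \<Phi> u n"
    and b: "b > 0" and \<gamma>_0: "\<gamma> 0 = 0"
    and resonant: "\<And>n. n \<ge> 1 \<Longrightarrow> \<gamma> n \<noteq> 0 \<Longrightarrow> \<exists>m::int. omega \<gamma> n = b * m"
    and u: "u \<in> Iso \<Phi> \<gamma>"
  shows "S (t + 2 * pi / b) u = S t u"
proof -
  have u0: "u \<in> Hs 0" and act: "actions \<Phi> u = \<gamma>"
    using u actions_eq_if_Iso[OF bij u \<gamma>_0] by (auto simp: Iso_def)
  have "\<Phi> (S (t + 2 * pi / b) u) n = \<Phi> (S t u) n" for n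
  proof (cases "n = 0")
    case True
    have "\<Phi> (S s u) \<in> hp (1/2)" for s
      using S_wp[OF u0] bij by (rule bij_betw_apply[rotated])
    then show ?thesis using True by (simp add: hp_def)
  next
    case False
    show ?thesis
    proof (cases "\<gamma> n = 0")
      case True
      then have "\<Phi> u n = 0" using act by (metis actions_def norm_eq_zero zero_eq_power2)
      then show ?thesis using S_Phi[OF u0] False by simp
    next
      case \<gamma>_n: False
      have "n \<ge> 1" using False by simp
      then obtain m :: int where m: "omega \<gamma> n = b * m" using resonant \<gamma>_n by blast
      have "omega \<gamma> n * (t + 2 * pi / b) = omega \<gamma> n * t + 2 * pi * m"
        using b by (simp add: m field_simps)
      then have "exp (\<i> * complex_of_real (omega \<gamma> n * (t + 2 * pi / b)))
          = exp (\<i> * complex_of_real (omega \<gamma> n * t) + 2 * pi * of_int m * \<i>)"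
        by (simp add: algebra_simps)
      also have "\<dots> = exp (\<i> * complex_of_real (omega \<gamma> n * t))"
        by (simp add: exp_add exp_two_pi_i' mult.commute flip: exp_of_nat_mult)
      finally show ?thesis using S_Phi[OF u0] False act by simp
    qed
  qed
  moreover have "inj_on \<Phi> (Hs 0)" using bij by (rule bij_betw_imp_inj_on)
  ultimately show ?thesis
    using S_wp[OF u0] by (metis inj_onD ext)
qed

lemma Iso_not_finite_gap:
  assumes u: "u \<in> Iso \<Phi> \<gamma>" and infinite_support: "infinite {n. \<gamma> n \<noteq> 0}"
  shows "\<not> finite_gap \<Phi> u"
proof
  assume "finite_gap \<Phi> u"
  then obtain M where M: "\<And>n. n \<ge> M \<Longrightarrow> \<Phi> u n = 0" by (auto simp: finite_gap_def)
  have "n \<le> max M 1" if "\<gamma> n \<noteq> 0" for n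
  proof (rule ccontr)
    assume "\<not> n \<le> max M 1"
    then have n: "n \<ge> M" "n \<ge> 1" by auto
    have "\<gamma> n = (cmod (\<Phi> u n))\<^sup>2" using u n(2) by (auto simp: Iso_def actions_def)
    also have "\<dots> = 0" using M n(1) by simp
    finally show False using that by simp
  qed
  then have "{n. \<gamma> n \<noteq> 0} \<subseteq> {..max M 1}" by blast
  then show False using infinite_support finite_subset by blast
qed

theorem theorem3p1:
  fixes b :: real
    and \<Phi> :: "(nat \<Rightarrow> complex) \<Rightarrow> (nat \<Rightarrow> complex)"
    and S :: "real \<Rightarrow> (nat \<Rightarrow> complex) \<Rightarrow> (nat \<Rightarrow> complex)"
  assumes b_pos: "b > 0"
    and b_irrat: "b \<notin> \<rat>"
    and Phi_bij: "\<And>s. s > -1/2 \<Longrightarrow> bij_betw \<Phi> (Hs s) (hp (s + 1/2))"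
    and S_wp: "\<And>s t u. s > -1/2 \<Longrightarrow> u \<in> Hs s \<Longrightarrow> S t u \<in> Hs s"
    and S_Phi: "\<And>s t u n. s > -1/2 \<Longrightarrow> u \<in> Hs s \<Longrightarrow> n \<ge> 1 \<Longrightarrow>
                  \<Phi> (S t u) n = exp (\<i> * complex_of_real (omega (actions \<Phi> u) n * t)) * \<Phi> u n"
  shows "\<exists>(np :: nat \<Rightarrow> nat) (\<gamma> :: nat \<Rightarrow> real).
           strict_mono_on {1..} np
         \<and> (\<forall>p\<ge>1. np p \<ge> 1 \<and> \<gamma> (np p) > 0)
         \<and> (\<forall>n\<ge>1. n \<notin> np ` {1..} \<longrightarrow> \<gamma> n = 0)
         \<and> summable (\<lambda>n. real n * \<gamma> n)
         \<and> \<not> ((\<lambda>p. (real (np p))^3 * \<gamma> (np p)) summable_on {1..})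
         \<and> (\<forall>p\<ge>1. \<exists>m::int. omega \<gamma> (np p) = b * of_int m)
         \<and> Iso \<Phi> \<gamma> \<noteq> {}
         \<and> (\<forall>u0 \<in> Iso \<Phi> \<gamma>. u0 \<notin> Hs 1
               \<and> (\<forall>t. S (t + 2 * pi / b) u0 = S t u0)
               \<and> \<not> finite_gap \<Phi> u0)"
proof -
  have bij_0: "bij_betw \<Phi> (Hs 0) (hp (1/2))" and bij_1: "bij_betw \<Phi> (Hs 1) (hp (3/2))"
    using Phi_bij[of 0] Phi_bij[of 1] by simp_all
  obtain N Sq \<tau> where "gamma_construction N Sq \<tau>"
    and Sq_mod_b: "\<And>i. \<exists>m::int. Sq i = (real (N i))\<^sup>2 - b * m"
    using exists_gamma_construction[OF b_pos b_irrat] by blast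
  then interpret gamma_construction N Sq \<tau> by simp
  define np where "np p = N (p - 1)" for p
  have np_image: "np ` {1..} = range N"
    by (auto simp: np_def image_iff intro!: bexI[of _ "Suc _"])
  have np_mono: "strict_mono_on {1..} np"
    using strict_mono_N by (auto simp: strict_mono_on_def np_def strict_mono_less)
  have resonant: "\<exists>m::int. omega gamma n = b * m" if "gamma n \<noteq> 0" for n
    using Sq_mod_b that by (rule omega_gamma_multiple)
  have S_wp_0: "\<And>t u. u \<in> Hs 0 \<Longrightarrow> S t u \<in> Hs 0"
    and S_Phi_0: "\<And>t u n. u \<in> Hs 0 \<Longrightarrow> n \<ge> 1 \<Longrightarrow>
      \<Phi> (S t u) n = exp (\<i> * complex_of_real (omega (actions \<Phi> u) n * t)) * \<Phi> u n"
    using S_wp[of 0] S_Phi[of 0] by simp_all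
  have "u0 \<notin> Hs 1 \<and> (\<forall>t. S (t + 2 * pi / b) u0 = S t u0) \<and> \<not> finite_gap \<Phi> u0"
    if "u0 \<in> Iso \<Phi> gamma" for u0
  proof (intro conjI allI)
    show "u0 \<notin> Hs 1" using bij_1 that not_summable_cube_gamma by (rule Iso_not_Hs_1)
    show "S (t + 2 * pi / b) u0 = S t u0" for t
      by (rule Iso_periodic[OF bij_0 S_wp_0 S_Phi_0 b_pos gamma_0 _ that]) (auto intro: resonant)
    show "\<not> finite_gap \<Phi> u0" using that infinite_support_gamma by (rule Iso_not_finite_gap)
  qed
  moreover have "\<forall>p\<ge>1. np p \<ge> 1 \<and> gamma (np p) > 0"
    using N_ge_1 gamma_N_pos by (simp add: np_def)
  moreover have "\<forall>p\<ge>1. \<exists>m::int. omega gamma (np p) = b * m"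
    unfolding np_def using resonant gamma_N_pos by (metis less_irrefl)
  moreover have "Iso \<Phi> gamma \<noteq> {}"
    using bij_0 gamma_nonneg summable_weighted_gamma by (rule Iso_nonempty)
  ultimately show ?thesis
    using np_mono np_image gamma_eq_0 summable_weighted_gamma not_summable_on_cube_gamma_N_shifted
    by (intro exI[of _ np] exI[of _ gamma]) (auto simp: np_def)
qed

end
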